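(* Let $C$ be a cyclic $A_\infty$ coalgebra of degree $-d$, $R=\mathbf\Omega_\infty(\tilde C)$, $n=2-d$. Then $\bar\partial:R\to\Omega^1_{R,\natural}$ and $\beta:\Omega^1_{R,\natural}\to R$ are morphisms of Lie modules over $R_\natural$, that is, $$\bar\partial\{r,q\}=\{r,\bar\partial(q)\}_{\Omega^1_{R,\natural}},\qquad\beta\{r,\omega\}_{\Omega^1_{R,\natural}}=\{r,\beta(\omega)\}$$ for $r,q\in R$ and $\omega\in\Omega^1_{R,\natural}$.
   Context: $C$ is a cyclic $A_\infty$ coalgebra of degree $-d$ (graded, locally finite, $\triangle_n:C\to C^{\otimes n}$ of degree $n-2$ with the $A_\infty$ relations, nondegenerate graded-symmetric $\langle-,-\rangle:C\otimes C\to k[d]$ with $\langle a,b^1\rangle b^2\cdots b^r=(-1)^{r+|b^1|(|a|+r)}\langle b,a^r\rangle a^1\cdots a^{r-1}$). $R=T(s^{-1}C)$ is the cobar construction of $k\oplus C$, with double bracket $\{\!\{r,q\}\!\}=\sum_{i,j}(-1)^{|v_i|+\epsilon}\langle v_i,w_j\rangle(s^{-1}w_1\cdots s^{-1}w_{j-1}s^{-1}v_{i+1}\cdots s^{-1}v_k)\otimes(s^{-1}v_1\cdots s^{-1}v_{i-1}s^{-1}w_{j+1}\cdots s^{-1}w_m)$ for $r=(s^{-1}v_1\cdots s^{-1}v_k)$, $q=(s^{-1}w_1\cdots s^{-1}w_m)$, $\epsilon=(|r|+d)\sum_{l<j}|s^{-1}w_l|+(\sum_{l<i}|s^{-1}v_l|+|s^{-1}w_j|+d)\sum_{l>i}|s^{-1}v_l|$,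 and $\{-,-\}=\mu\circ\{\!\{-,-\}\!\}$. $\Omega^1_R=\ker(R\otimes R\to R)\cong R\otimes s^{-1}C\otimes R$ via $\mathrm I(b\otimes x\otimes c)=bx\otimes c-b\otimes xc$; $\Omega^1_{R,\natural}=\Omega^1_R/[R,\Omega^1_R]\cong R\otimes s^{-1}C$. The universal derivation $\partial(x_1\cdots x_m)=\sum_i(x_1\cdots x_{i-1})\otimes x_i\otimes(x_{i+1}\cdots x_m)$ induces $\bar\partial(x_1\cdots x_m)=\sum_i(-1)^{(|x_1|+\cdots+|x_i|)(|x_{i+1}|+\cdots+|x_m|)}(x_{i+1}\cdots x_mx_1\cdots x_{i-1})\otimes x_i$, and $\beta((x_1\cdots x_m)\otimes x_{m+1})=x_1\cdots x_{m+1}-(-1)^{|x_{m+1}|(|x_1|+\cdots+|x_m|)}x_{m+1}x_1\cdots x_m$ ($x_i\in s^{-1}C$). On $R\otimes R$: $\{\!\{r,p\otimes q\}\!\}_{R\otimes R}=\{\!\{r,p\}\!\}\otimes q+(-1)^{|p|(|r|+n)}p\otimes\{\!\{r,q\}\!\}$; for $\omega\in\Omega^1_R$, $\{r,\omega\}_{\Omega^1_R}$ is obtained by applying the bimodule action map to $\{\!\{r,\mathrm I(\omega)\}\!\}_{R\otimes R}\in(R\otimes\Omega^1_R)\oplus(\Omega^1_R\otimes R)$, and $\{r,\omega\}_{\Omega^1_{R,\natural}}$ is its image in $\Omega^1_{R,\natural}$. *)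

theory Defs
  imports Main
begin

(* C is a graded k-vector space given by a homogeneous basis, indexed by the
   type 'b, with (homological) degree  deg :: 'b => int.
   A letter of R = T(s^{-1} C) is s^{-1} b for a basis element b; it has degree
   deg b - 1.  A basis of R is given by words  'b list  (the empty word is 1).
   Vectors are coefficient functions (finitely supported where relevant):
     R               :  'b list => 'k
     R (x) R         :  'b list * 'b list => 'k
     R (x) R (x) R   :  'b list * 'b list * 'b list => 'k
     Omega^1_{R,nat} = R (x) s^{-1}C          :  'b list * 'b => 'k
     Omega^1_R       = R (x) s^{-1}C (x) R    :  'b list * 'b * 'b list => 'k
   Linear maps are given by their values on basis vectors and extended
   linearly (lin), bilinear maps likewise (ext2).
--------------------------------------------------------------------------- *)

definition sgn :: "int \<Rightarrow> 'k::field" where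
  "sgn e = (if even e then 1 else -1)"

definition supp :: "('a \<Rightarrow> 'k::zero) \<Rightarrow> 'a set" where
  "supp f = {x. f x \<noteq> 0}"

definition fin_supp :: "('a \<Rightarrow> 'k::zero) \<Rightarrow> bool" where
  "fin_supp f \<longleftrightarrow> finite (supp f)"

definition vec :: "'a \<Rightarrow> 'k::zero \<Rightarrow> 'a \<Rightarrow> 'k" where
  "vec a c = (\<lambda>z. if z = a then c else 0)"

definition lin :: "('a \<Rightarrow> 'c \<Rightarrow> 'k::field) \<Rightarrow> ('a \<Rightarrow> 'k) \<Rightarrow> 'c \<Rightarrow> 'k" where
  "lin f T = (\<lambda>z. \<Sum>a\<in>supp T. T a * f a z)"

definition ext2 :: "('a \<Rightarrow> 'b \<Rightarrow> 'c \<Rightarrow> 'k::field) \<Rightarrow> ('a \<Rightarrow> 'k) \<Rightarrow> ('b \<Rightarrow> 'k) \<Rightarrow> 'c \<Rightarrow> 'k" where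
  "ext2 F S T = (\<lambda>z. \<Sum>a\<in>supp S. \<Sum>b\<in>supp T. S a * T b * F a b z)"

(* degree in C of a word of basis elements (C^{(x) m}) *)
definition cdeg :: "('b \<Rightarrow> int) \<Rightarrow> 'b list \<Rightarrow> int" where
  "cdeg deg w = sum_list (map deg w)"

definition sdeg :: "('b \<Rightarrow> int) \<Rightarrow> 'b \<Rightarrow> int" where
  "sdeg deg b = deg b - 1"

(* degree in R of the word s^{-1}w_1 ... s^{-1}w_m *)
definition wdeg :: "('b \<Rightarrow> int) \<Rightarrow> 'b list \<Rightarrow> int" where
  "wdeg deg w = sum_list (map (sdeg deg) w)"

(* Delta_n(e) = sum_w D n e w * w  (w a word of length n) *)
definition Ainf_coalgebra ::
  "('b \<Rightarrow> int) \<Rightarrow> (nat \<Rightarrow> 'b \<Rightarrow> 'b list \<Rightarrow> 'k::field) \<Rightarrow> bool" where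
  "Ainf_coalgebra deg D \<longleftrightarrow>
     (\<forall>i. finite {b. deg b = i}) \<comment> \<open>locally finite\<close>
   \<and> (\<forall>n e. finite {w. D n e w \<noteq> 0})
   \<and> (\<forall>e. finite {n. \<exists>w. D n e w \<noteq> 0})
   \<and> (\<forall>n e w. D n e w \<noteq> 0 \<longrightarrow> 1 \<le> n \<and> length w = n \<and> cdeg deg w = deg e + int n - 2)
   \<and> (\<forall>n\<ge>1. \<forall>e w. length w = n \<longrightarrow>
        (\<Sum>r\<le>n. \<Sum>s\<in>{1..n-r}.
           \<Sum>u\<in>{u. D (n - s + 1) e u \<noteq> 0}.
             (if take r u = take r w \<and> drop (Suc r) u = drop (r + s) w
              then sgn (int r + int s * int (n - r - s) + (int s - 2) * cdeg deg (take r u))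
                   * D (n - s + 1) e u * D s (u ! r) (take s (drop r w))
              else 0)) = 0)"

definition cyclic_pairing ::
  "('b \<Rightarrow> int) \<Rightarrow> (nat \<Rightarrow> 'b \<Rightarrow> 'b list \<Rightarrow> 'k::field) \<Rightarrow> ('b \<Rightarrow> 'b \<Rightarrow> 'k) \<Rightarrow> int \<Rightarrow> bool" where
  "cyclic_pairing deg D pair d \<longleftrightarrow>
     (\<forall>a b. pair a b \<noteq> 0 \<longrightarrow> deg a + deg b = d)
   \<and> (\<forall>a b. pair a b = sgn (deg a * deg b) * pair b a)
   \<and> (\<forall>f :: 'b \<Rightarrow> 'k. fin_supp f \<longrightarrow> (\<forall>b. (\<Sum>a\<in>supp f. f a * pair a b) = 0) \<longrightarrow> f = (\<lambda>_. 0))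
   \<and> (\<forall>r\<ge>1. \<forall>a b u. length u = r - 1 \<longrightarrow>
        (\<Sum>x\<in>{x. D r b (x # u) \<noteq> 0}.
            sgn (int r + deg x * (deg a + int r)) * pair a x * D r b (x # u))
      = (\<Sum>y\<in>{y. D r a (u @ [y]) \<noteq> 0}. pair b y * D r a (u @ [y])))"

definition cyclic_Ainf_coalgebra ::
  "('b \<Rightarrow> int) \<Rightarrow> (nat \<Rightarrow> 'b \<Rightarrow> 'b list \<Rightarrow> 'k::field) \<Rightarrow> ('b \<Rightarrow> 'b \<Rightarrow> 'k) \<Rightarrow> int \<Rightarrow> bool" where
  "cyclic_Ainf_coalgebra deg D pair d \<longleftrightarrow> Ainf_coalgebra deg D \<and> cyclic_pairing deg D pair d"

definition dbr_basis ::
  "('b \<Rightarrow> int) \<Rightarrow> ('b \<Rightarrow> 'b \<Rightarrow> 'k::field) \<Rightarrow> int \<Rightarrow> 'b list \<Rightarrow> 'b list \<Rightarrow> 'b list \<times> 'b list \<Rightarrow> 'k" where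
  "dbr_basis deg pair d v w = (\<lambda>z.
     \<Sum>i<length v. \<Sum>j<length w.
       (if z = (take j w @ drop (Suc i) v, take i v @ drop (Suc j) w)
        then sgn (deg (v ! i)
                  + (wdeg deg v + d) * wdeg deg (take j w)
                  + (wdeg deg (take i v) + sdeg deg (w ! j) + d) * wdeg deg (drop (Suc i) v))
             * pair (v ! i) (w ! j)
        else 0))"

definition dbr ::
  "('b \<Rightarrow> int) \<Rightarrow> ('b \<Rightarrow> 'b \<Rightarrow> 'k::field) \<Rightarrow> int \<Rightarrow> ('b list \<Rightarrow> 'k) \<Rightarrow> ('b list \<Rightarrow> 'k) \<Rightarrow> 'b list \<times> 'b list \<Rightarrow> 'k" where
  "dbr deg pair d = ext2 (dbr_basis deg pair d)"

definition mult :: "('b list \<times> 'b list \<Rightarrow> 'k::field) \<Rightarrow> 'b list \<Rightarrow> 'k" where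
  "mult = lin (\<lambda>(p, q). vec (p @ q) 1)"

definition br ::
  "('b \<Rightarrow> int) \<Rightarrow> ('b \<Rightarrow> 'b \<Rightarrow> 'k::field) \<Rightarrow> int \<Rightarrow> ('b list \<Rightarrow> 'k) \<Rightarrow> ('b list \<Rightarrow> 'k) \<Rightarrow> 'b list \<Rightarrow> 'k" where
  "br deg pair d r q = mult (dbr deg pair d r q)"

(* {r, -}_{Omega^1_R} on a basis word v (for r) and a basis tensor p (x) q of
   R (x) R: the double bracket {{v, p (x) q}}_{R(x)R}
      = {{v,p}} (x) q + (-1)^{|p|(|v|+n)} p (x) {{v,q}},  n = 2 - d,
   followed by the action (multiplication) maps: on the first summand the
   first two tensor factors are multiplied, (u (x) u') (x) q |-> uu' (x) q,
   and on the second summand the last two, p (x) (u (x) u') |-> p (x) uu'.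
   (So {r, p (x) q} = {r,p} (x) q + (-1)^{|p|(|r|+n)} p (x) {r,q}.) *)
definition brOm_basis ::
  "('b \<Rightarrow> int) \<Rightarrow> ('b \<Rightarrow> 'b \<Rightarrow> 'k::field) \<Rightarrow> int \<Rightarrow> 'b list \<Rightarrow> 'b list \<times> 'b list \<Rightarrow> 'b list \<times> 'b list \<Rightarrow> 'k" where
  "brOm_basis deg pair d v pq = (case pq of (p, q) \<Rightarrow>
     let first  = (\<lambda>(a, b, c). dbr_basis deg pair d v p (a, b) * (if c = q then 1 else 0));
         second = (\<lambda>(a, b, c). sgn (wdeg deg p * (wdeg deg v + (2 - d)))
                                * (if a = p then 1 else 0) * dbr_basis deg pair d v q (b, c))
     in (\<lambda>z. lin (\<lambda>(a, b, c). vec (a @ b, c) 1) first z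
            + lin (\<lambda>(a, b, c). vec (a, b @ c) 1) second z))"

definition brOm ::
  "('b \<Rightarrow> int) \<Rightarrow> ('b \<Rightarrow> 'b \<Rightarrow> 'k::field) \<Rightarrow> int \<Rightarrow> ('b list \<Rightarrow> 'k) \<Rightarrow> ('b list \<times> 'b list \<Rightarrow> 'k) \<Rightarrow> 'b list \<times> 'b list \<Rightarrow> 'k" where
  "brOm deg pair d = ext2 (brOm_basis deg pair d)"

(* I : R (x) s^{-1}C (x) R -> Omega^1_R \<subseteq> R (x) R,  b x c |-> bx (x) c - b (x) xc *)
definition Imap :: "('b list \<times> 'b \<times> 'b list \<Rightarrow> 'k::field) \<Rightarrow> 'b list \<times> 'b list \<Rightarrow> 'k" where
  "Imap = lin (\<lambda>(b, x, c). (\<lambda>z. vec (b @ [x], c) 1 z - vec (b, x # c) 1 z))"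

(* inverse of I on Omega^1_R = ker(mult):  u (x) v |-> (\<partial> u) v *)
definition Jmap :: "('b list \<times> 'b list \<Rightarrow> 'k::field) \<Rightarrow> 'b list \<times> 'b \<times> 'b list \<Rightarrow> 'k" where
  "Jmap = lin (\<lambda>(u, v). (\<lambda>z. \<Sum>i<length u. vec (take i u, u ! i, drop (Suc i) u @ v) 1 z))"

(* projection Omega^1_R = R (x) s^{-1}C (x) R -> Omega^1_{R,nat} = R (x) s^{-1}C,
   b (x) x (x) c |-> (-1)^{|c|(|b|+|x|)} cb (x) x *)
definition natmap :: "('b \<Rightarrow> int) \<Rightarrow> ('b list \<times> 'b \<times> 'b list \<Rightarrow> 'k::field) \<Rightarrow> 'b list \<times> 'b \<Rightarrow> 'k" where
  "natmap deg = lin (\<lambda>(b, x, c). vec (c @ b, x) (sgn (wdeg deg c * (wdeg deg b + sdeg deg x))))"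

(* section Omega^1_{R,nat} -> Omega^1_R,  b (x) x |-> b (x) x (x) 1 *)
definition liftmap :: "('b list \<times> 'b \<Rightarrow> 'k::field) \<Rightarrow> 'b list \<times> 'b \<times> 'b list \<Rightarrow> 'k" where
  "liftmap = lin (\<lambda>(b, x). vec (b, x, []) 1)"

definition brNat ::
  "('b \<Rightarrow> int) \<Rightarrow> ('b \<Rightarrow> 'b \<Rightarrow> 'k::field) \<Rightarrow> int \<Rightarrow> ('b list \<Rightarrow> 'k) \<Rightarrow> ('b list \<times> 'b \<Rightarrow> 'k) \<Rightarrow> 'b list \<times> 'b \<Rightarrow> 'k" where
  "brNat deg pair d r \<omega> = natmap deg (Jmap (brOm deg pair d r (Imap (liftmap \<omega>))))"

definition dbar :: "('b \<Rightarrow> int) \<Rightarrow> ('b list \<Rightarrow> 'k::field) \<Rightarrow> 'b list \<times> 'b \<Rightarrow> 'k" where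
  "dbar deg = lin (\<lambda>w. (\<lambda>z. \<Sum>i<length w.
      vec (drop (Suc i) w @ take i w, w ! i)
          (sgn (wdeg deg (take (Suc i) w) * wdeg deg (drop (Suc i) w))) z))"

definition beta :: "('b \<Rightarrow> int) \<Rightarrow> ('b list \<times> 'b \<Rightarrow> 'k::field) \<Rightarrow> 'b list \<Rightarrow> 'k" where
  "beta deg = lin (\<lambda>(w, x). (\<lambda>z. vec (w @ [x]) 1 z
                                 - vec (x # w) (sgn (sdeg deg x * wdeg deg w)) z))"

end

theory Submission
  imports Defs
begin

text \<open>
  All maps in the statement are linear extensions of their values on basis words, and both brackets
  are bilinear, so it suffices to compare both sides for a basis word \<open>v\<close> in place of \<open>r\<close>
  and a basis word \<open>w\<close> (resp. a basis tensor \<open>b \<otimes> x\<close>).  There every term is indexed by a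
  letter \<open>v\<^sub>i\<close> of \<open>v\<close> paired with a letter of the other argument.

  Applying \<open>\<partial>\<close>-bar to the term \<open>w_<j v_>i v_<i w_>j\<close> of \<open>{v, w}\<close> cuts it at one of its
  letters.  If that letter comes from \<open>w\<close>, the result is a term of \<open>{v, \<partial>-bar w}\<close> in which
  \<open>v\<^sub>i\<close> is paired with \<open>w\<^sub>j\<close> inside the word part; if it comes from \<open>v\<close>, the result is a
  term of \<open>{v, \<partial>-bar w}\<close> in which \<open>v\<^sub>i\<close> is paired with the letter \<open>w\<^sub>j\<close> split off by
  \<open>\<partial>-bar\<close>.  For \<open>\<beta>\<close>, the terms of \<open>{v, b \<otimes> x}\<close> pairing \<open>v\<close> with a letter of \<open>b\<close>
  map to the corresponding terms of \<open>{v, b x}\<close> and \<open>{v, x b}\<close>, while those pairing \<open>v\<close>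
  with \<open>x\<close> form a sum over the rotations of a word, which \<open>\<beta>\<close> turns into a telescoping sum.
\<close>

lemma supp_vec: "supp (vec a c) \<subseteq> {a}"
  by (auto simp: supp_def vec_def)

lemma fin_supp_vec [simp]: "fin_supp (vec a c)"
  unfolding fin_supp_def by (rule finite_subset[OF supp_vec]) simp

lemma vec_scale: "c * vec a c' z = vec a (c * c' :: 'k::field) z"
  by (simp add: vec_def)

lemma fin_supp_sum [intro]:
  "finite I \<Longrightarrow> (\<And>i. i \<in> I \<Longrightarrow> fin_supp (T i)) \<Longrightarrow> fin_supp (\<lambda>z. \<Sum>i\<in>I. T i z)"
  unfolding fin_supp_def
  by (rule finite_subset[of _ "\<Union>i\<in>I. supp (T i)"]) (auto simp: supp_def dest: sum.not_neutral_contains_not_neutral)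

lemma fin_supp_add [intro]: "fin_supp S \<Longrightarrow> fin_supp T \<Longrightarrow> fin_supp (\<lambda>z. S z + (T z::'k::field))"
  unfolding fin_supp_def by (rule finite_subset[of _ "supp S \<union> supp T"]) (auto simp: supp_def)

lemma fin_supp_diff [intro]: "fin_supp S \<Longrightarrow> fin_supp T \<Longrightarrow> fin_supp (\<lambda>z. S z - (T z::'k::field))"
  unfolding fin_supp_def by (rule finite_subset[of _ "supp S \<union> supp T"]) (auto simp: supp_def)

lemma fin_supp_scale [intro]: "fin_supp T \<Longrightarrow> fin_supp (\<lambda>z. c * (T z::'k::field))"
  unfolding fin_supp_def by (rule finite_subset[of _ "supp T"]) (auto simp: supp_def)

lemma fin_supp_lin [intro]:
  assumes "fin_supp T" "\<And>a. fin_supp (f a)"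
  shows "fin_supp (lin f T)"
  unfolding lin_def using assms by (intro fin_supp_sum fin_supp_scale) (auto simp: fin_supp_def)

lemma lin_superset:
  assumes "finite A" "supp T \<subseteq> A"
  shows "lin f T z = (\<Sum>a\<in>A. T a * f a z)"
  unfolding lin_def using assms by (intro sum.mono_neutral_left) (auto simp: supp_def)

lemma lin_vec [simp]: "lin f (vec a (c::'k::field)) = (\<lambda>z. c * f a z)"
proof
  fix z
  show "lin f (vec a c) z = c * f a z"
    using lin_superset[of "{a}" "vec a c" f z, OF _ supp_vec] by (simp add: vec_def)
qed

lemma lin_sum:
  assumes "finite I" "\<And>i. i \<in> I \<Longrightarrow> fin_supp (T i)"
  shows "lin f (\<lambda>z. \<Sum>i\<in>I. T i z) = (\<lambda>z. \<Sum>i\<in>I. lin f (T i) z)"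
proof
  fix z
  define A where "A = (\<Union>i\<in>I. supp (T i))"
  have A: "finite A" "\<And>i. i \<in> I \<Longrightarrow> supp (T i) \<subseteq> A"
    using assms by (auto simp: A_def fin_supp_def)
  have "lin f (\<lambda>z. \<Sum>i\<in>I. T i z) z = (\<Sum>a\<in>A. (\<Sum>i\<in>I. T i a) * f a z)"
    by (rule lin_superset[OF A(1)])
       (auto simp: A_def supp_def dest: sum.not_neutral_contains_not_neutral)
  also have "\<dots> = (\<Sum>i\<in>I. \<Sum>a\<in>A. T i a * f a z)"
    by (simp add: sum_distrib_right) (rule sum.swap)
  also have "\<dots> = (\<Sum>i\<in>I. lin f (T i) z)"
    by (intro sum.cong refl lin_superset[symmetric] A)
  finally show "lin f (\<lambda>z. \<Sum>i\<in>I. T i z) z = (\<Sum>i\<in>I. lin f (T i) z)" .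
qed

lemma lin_scale:
  assumes "fin_supp T"
  shows "lin f (\<lambda>z. c * T z) = (\<lambda>z. c * lin f T z)"
proof
  fix z
  have "lin f (\<lambda>z. c * T z) z = (\<Sum>a\<in>supp T. (c * T a) * f a z)"
    using assms by (intro lin_superset) (auto simp: supp_def fin_supp_def)
  then show "lin f (\<lambda>z. c * T z) z = c * lin f T z"
    by (simp add: lin_def sum_distrib_left mult.assoc)
qed

lemma lin_sum_scale:
  assumes "finite I" "\<And>i. fin_supp (T i)"
  shows "lin f (\<lambda>z. \<Sum>i\<in>I. c i * T i z) = (\<lambda>z. \<Sum>i\<in>I. c i * lin f (T i) z)"
  using assms by (simp add: lin_sum fin_supp_scale lin_scale)

lemma lin_add:
  assumes "fin_supp S" "fin_supp T"
  shows "lin f (\<lambda>z. S z + T z) = (\<lambda>z. lin f S z + lin f T z)"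
  using lin_sum[of "UNIV :: bool set" "\<lambda>i. if i then S else T" f] assms
  by (simp add: UNIV_bool add.commute)

lemma lin_diff:
  assumes "fin_supp S" "fin_supp T"
  shows "lin f (\<lambda>z. S z - T z) = (\<lambda>z. lin f S z - lin f T z)"
  using lin_add[of S "\<lambda>z. - 1 * T z" f] lin_scale[of T f "- 1"] fin_supp_scale[of T "- 1"] assms
  by simp

lemma lin_lin:
  assumes "fin_supp T" "\<And>a. fin_supp (f a)"
  shows "lin g (lin f T) = lin (\<lambda>a. lin g (f a)) T"
  unfolding lin_def[of f] using assms
  by (subst lin_sum_scale) (auto simp: fin_supp_def lin_def)

lemma ext2_lin: "ext2 F S T = (\<lambda>z. \<Sum>a\<in>supp S. S a * lin (F a) T z)"
  by (simp add: ext2_def lin_def sum_distrib_left mult.assoc)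

lemma fin_supp_ext2 [intro]:
  "fin_supp S \<Longrightarrow> fin_supp T \<Longrightarrow> (\<And>a b. fin_supp (F a b)) \<Longrightarrow> fin_supp (ext2 F S T)"
  unfolding ext2_lin by (intro fin_supp_sum fin_supp_scale fin_supp_lin) (auto simp: fin_supp_def)

lemma lin_ext2:
  assumes "fin_supp S" "fin_supp T" "\<And>a b. fin_supp (F a b)"
  shows "lin G (ext2 F S T) = ext2 (\<lambda>a b. lin G (F a b)) S T"
proof -
  have "finite (supp S)" using assms(1) by (simp add: fin_supp_def)
  then show ?thesis unfolding ext2_lin using assms by (simp add: lin_sum_scale fin_supp_lin lin_lin)
qed

lemma ext2_lin_right:
  assumes "fin_supp T" "\<And>b. fin_supp (g b)"
  shows "ext2 F S (lin g T) = ext2 (\<lambda>a b. lin (F a) (g b)) S T"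
  unfolding ext2_lin using assms by (simp add: lin_lin)

lemma lin_sum_vec:
  "finite I \<Longrightarrow> lin f (\<lambda>z. \<Sum>i\<in>I. vec (K i) (c i) z) = (\<lambda>z. \<Sum>i\<in>I. c i * f (K i) z)"
  by (simp add: lin_sum)

lemma lin_sum_vec2:
  assumes "finite I" "\<And>i. finite (J i)"
  shows "lin f (\<lambda>z. \<Sum>i\<in>I. \<Sum>j\<in>J i. vec (K i j) (c i j) z)
       = (\<lambda>z. \<Sum>i\<in>I. \<Sum>j\<in>J i. c i j * f (K i j) z)"
  using assms by (simp add: lin_sum fin_supp_sum)

lemma sum_lessThan_add:
  "(\<Sum>t<m + (n::nat). f t) = (\<Sum>t<m. f t) + (\<Sum>s<n. f (m + s) :: 'a::comm_monoid_add)"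
  by (induction n) (simp_all add: add.assoc)

lemma sum_triangle_reindex:
  "(\<Sum>j<(m::nat). \<Sum>t<j. f j t) = (\<Sum>t<m. \<Sum>r<m - 1 - t. f (t + 1 + r) t :: 'a::comm_monoid_add)"
proof (induction m)
  case 0
  then show ?case by simp
next
  case (Suc m)
  have "(\<Sum>r<Suc m - 1 - t. f (t + 1 + r) t) = (\<Sum>r<m - 1 - t. f (t + 1 + r) t) + f m t"
    if "t < m" for t
  proof -
    from that have "Suc m - 1 - t = Suc (m - 1 - t)" "t + 1 + (m - 1 - t) = m" by auto
    then show ?thesis by (simp only: sum.lessThan_Suc)
  qed
  then show ?case using Suc.IH by (simp add: sum.distrib sum.lessThan_Suc)
qed

lemma sgn_add: "Defs.sgn (a + b) = (Defs.sgn a * Defs.sgn b :: 'k::field)"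
  by (simp add: Defs.sgn_def)

lemma sgn_parity: "even (a - b) \<Longrightarrow> Defs.sgn a = (Defs.sgn b :: 'k::field)"
  by (simp add: Defs.sgn_def)

lemma sgn_0 [simp]: "Defs.sgn 0 = (1::'k::field)"
  by (simp add: Defs.sgn_def)

lemma sgn_transfer:
  "even (a + b - (c + e)) \<Longrightarrow> Defs.sgn a * p * Defs.sgn b = Defs.sgn c * (Defs.sgn e * (p::'k::field))"
  by (simp add: Defs.sgn_def) (smt (verit) even_add even_diff)

lemma sgn_transfer3:
  "even (a + b - (c + e + f)) \<Longrightarrow>
   Defs.sgn a * p * Defs.sgn b = Defs.sgn c * (Defs.sgn e * p) * (Defs.sgn f :: 'k::field)"
  by (simp add: Defs.sgn_def) (smt (verit) even_add even_diff)

lemma wdeg_Nil [simp]: "wdeg deg [] = 0"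
  by (simp add: wdeg_def)

lemma wdeg_Cons [simp]: "wdeg deg (x # ys) = sdeg deg x + wdeg deg ys"
  by (simp add: wdeg_def)

lemma wdeg_append [simp]: "wdeg deg (xs @ ys) = wdeg deg xs + wdeg deg ys"
  by (simp add: wdeg_def)

lemma wdeg_split:
  "i < length xs \<Longrightarrow> wdeg deg xs = wdeg deg (take i xs) + sdeg deg (xs ! i) + wdeg deg (drop (Suc i) xs)"
  by (metis id_take_nth_drop wdeg_append wdeg_Cons add.assoc)

lemma split_at_index: "i < length v \<Longrightarrow> \<exists>T y D. v = T @ y # D \<and> length T = i"
  by (metis id_take_nth_drop length_take min.absorb4)

definition cyclic_remove :: "'b list \<Rightarrow> nat \<Rightarrow> 'b list" where
  "cyclic_remove v i = drop (Suc i) v @ take i v"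

definition dbr_coeff ::
  "('b \<Rightarrow> int) \<Rightarrow> ('b \<Rightarrow> 'b \<Rightarrow> 'k::field) \<Rightarrow> int \<Rightarrow> 'b list \<Rightarrow> 'b list \<Rightarrow> nat \<Rightarrow> nat \<Rightarrow> 'k" where
  "dbr_coeff deg pair d v w i j =
     Defs.sgn (deg (v ! i) + (wdeg deg v + d) * wdeg deg (take j w)
               + (wdeg deg (take i v) + sdeg deg (w ! j) + d) * wdeg deg (drop (Suc i) v))
     * pair (v ! i) (w ! j)"

definition dbr_word :: "'b list \<Rightarrow> 'b list \<Rightarrow> nat \<Rightarrow> nat \<Rightarrow> 'b list" where
  "dbr_word v w i j = take j w @ drop (Suc i) v @ take i v @ drop (Suc j) w"

definition br_basis ::
  "('b \<Rightarrow> int) \<Rightarrow> ('b \<Rightarrow> 'b \<Rightarrow> 'k::field) \<Rightarrow> int \<Rightarrow> 'b list \<Rightarrow> 'b list \<Rightarrow> 'b list \<Rightarrow> 'k" where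
  "br_basis deg pair d v w =
     (\<lambda>z. \<Sum>i<length v. \<Sum>j<length w. vec (dbr_word v w i j) (dbr_coeff deg pair d v w i j) z)"

definition dbar_sign :: "('b \<Rightarrow> int) \<Rightarrow> 'b list \<Rightarrow> nat \<Rightarrow> 'k::field" where
  "dbar_sign deg w t = Defs.sgn (wdeg deg (take (Suc t) w) * wdeg deg (drop (Suc t) w))"

definition dbar_term :: "('b \<Rightarrow> int) \<Rightarrow> 'b list \<Rightarrow> nat \<Rightarrow> 'b list \<times> 'b \<Rightarrow> 'k::field" where
  "dbar_term deg w t = vec (cyclic_remove w t, w ! t) (dbar_sign deg w t)"

definition dbar_basis :: "('b \<Rightarrow> int) \<Rightarrow> 'b list \<Rightarrow> 'b list \<times> 'b \<Rightarrow> 'k::field" where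
  "dbar_basis deg w = (\<lambda>z. \<Sum>t<length w. dbar_term deg w t z)"

definition beta_basis :: "('b \<Rightarrow> int) \<Rightarrow> 'b list \<times> 'b \<Rightarrow> 'b list \<Rightarrow> 'k::field" where
  "beta_basis deg p = (\<lambda>z. vec (fst p @ [snd p]) 1 z
                          - vec (snd p # fst p) (Defs.sgn (sdeg deg (snd p) * wdeg deg (fst p))) z)"

definition nat_term :: "('b \<Rightarrow> int) \<Rightarrow> 'b list \<Rightarrow> 'b list \<Rightarrow> nat \<Rightarrow> 'b list \<times> 'b \<Rightarrow> 'k::field" where
  "nat_term deg u q t = vec (drop (Suc t) u @ q @ take t u, u ! t)
      (Defs.sgn (wdeg deg (drop (Suc t) u @ q) * (wdeg deg (take t u) + sdeg deg (u ! t))))"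

definition nat_basis :: "('b \<Rightarrow> int) \<Rightarrow> 'b list \<times> 'b list \<Rightarrow> 'b list \<times> 'b \<Rightarrow> 'k::field" where
  "nat_basis deg p = (\<lambda>z. \<Sum>t<length (fst p). nat_term deg (fst p) (snd p) t z)"

definition brNat_basis ::
  "('b \<Rightarrow> int) \<Rightarrow> ('b \<Rightarrow> 'b \<Rightarrow> 'k::field) \<Rightarrow> int \<Rightarrow> 'b list \<Rightarrow> 'b list \<times> 'b \<Rightarrow> 'b list \<times> 'b \<Rightarrow> 'k" where
  "brNat_basis deg pair d v p =
     lin (nat_basis deg) (lin (brOm_basis deg pair d v) (Imap (liftmap (vec p 1))))"

lemma fin_supp_br_basis [intro]: "fin_supp (br_basis deg pair d v w)"
  unfolding br_basis_def by (intro fin_supp_sum) auto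

lemma fin_supp_dbar_basis [intro]: "fin_supp (dbar_basis deg w)"
  unfolding dbar_basis_def dbar_term_def by (intro fin_supp_sum) auto

lemma fin_supp_beta_basis [intro]: "fin_supp (beta_basis deg p)"
  unfolding beta_basis_def by (intro fin_supp_diff) auto

lemma fin_supp_nat_basis [intro]: "fin_supp (nat_basis deg p)"
  unfolding nat_basis_def nat_term_def by (intro fin_supp_sum) auto

lemma dbr_basis_eq:
  "dbr_basis deg pair d v w = (\<lambda>z. \<Sum>i<length v. \<Sum>j<length w.
     vec (take j w @ drop (Suc i) v, take i v @ drop (Suc j) w) (dbr_coeff deg pair d v w i j) z)"
  by (simp add: dbr_basis_def dbr_coeff_def vec_def fun_eq_iff)

lemma fin_supp_dbr_basis [intro]: "fin_supp (dbr_basis deg pair d v w)"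
  unfolding dbr_basis_eq by (intro fin_supp_sum) auto

lemma mult_dbr_basis: "mult (dbr_basis deg pair d v w) = br_basis deg pair d v w"
  unfolding dbr_basis_eq mult_def br_basis_def
  by (subst lin_sum_vec2) (auto simp: dbr_word_def vec_scale)

lemma dbar_eq_lin: "dbar deg = lin (dbar_basis deg)"
  unfolding dbar_def dbar_basis_def[abs_def] dbar_term_def dbar_sign_def cyclic_remove_def by simp

lemma beta_eq_lin: "beta deg = lin (beta_basis deg)"
  unfolding beta_def beta_basis_def by (rule arg_cong[where f=lin]) (auto simp: fun_eq_iff)

lemma fin_supp_Imap_basis [intro]:
  "fin_supp ((\<lambda>(b, x, c). (\<lambda>z. vec (b @ [x], c) 1 z - vec (b, x # c) (1::'k::field) z)) p)"
  by (cases p) (auto intro!: fin_supp_diff)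

lemma fin_supp_liftmap_basis [intro]: "fin_supp ((\<lambda>(b, x). vec (b, x, []) 1) p)"
  by (cases p) auto

lemma natmap_Jmap_eq_lin:
  assumes "fin_supp X"
  shows "natmap deg (Jmap X) = lin (nat_basis deg) X"
proof -
  let ?J = "\<lambda>(u, v). (\<lambda>z. \<Sum>i<length u. vec (take i u, u ! i, drop (Suc i) u @ v) 1 z)"
  have "natmap deg (Jmap X) = lin (\<lambda>p. natmap deg (?J p)) X"
    unfolding natmap_def Jmap_def using assms by (intro lin_lin) auto
  also have "(\<lambda>p. natmap deg (?J p)) = nat_basis deg"
    by (auto simp: fun_eq_iff natmap_def lin_sum_vec nat_basis_def nat_term_def)
  finally show ?thesis .
qed

lemma brOm_basis_eq:
  "brOm_basis deg pair d v (p, q) = (\<lambda>z.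
      (\<Sum>i<length v. \<Sum>j<length p. vec (dbr_word v p i j, q) (dbr_coeff deg pair d v p i j) z)
    + (\<Sum>i<length v. \<Sum>j<length q. vec (p, dbr_word v q i j)
         (Defs.sgn (wdeg deg p * (wdeg deg v + (2 - d))) * dbr_coeff deg pair d v q i j) z))"
proof -
  let ?\<sigma> = "Defs.sgn (wdeg deg p * (wdeg deg v + (2 - d)))"
  have first: "(\<lambda>(a, b, c). dbr_basis deg pair d v p (a, b) * (if c = q then 1 else 0))
     = (\<lambda>z. \<Sum>i<length v. \<Sum>j<length p.
          vec (take j p @ drop (Suc i) v, take i v @ drop (Suc j) p, q) (dbr_coeff deg pair d v p i j) z)"
    by (auto simp: fun_eq_iff dbr_basis_eq vec_def sum_distrib_right intro!: sum.cong)
  have second: "(\<lambda>(a, b, c). ?\<sigma> * (if a = p then 1 else 0) * dbr_basis deg pair d v q (b, c))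
     = (\<lambda>z. \<Sum>i<length v. \<Sum>j<length q.
          vec (p, take j q @ drop (Suc i) v, take i v @ drop (Suc j) q) (?\<sigma> * dbr_coeff deg pair d v q i j) z)"
    by (auto simp: fun_eq_iff dbr_basis_eq vec_def sum_distrib_left intro!: sum.cong)
  show ?thesis
    unfolding brOm_basis_def Let_def prod.case first second
    by (simp add: lin_sum_vec2 dbr_word_def vec_scale)
qed

lemma fin_supp_brOm_basis [intro]: "fin_supp (brOm_basis deg pair d v p)"
  by (cases p) (simp only: brOm_basis_eq, intro fin_supp_add fin_supp_sum, auto)

lemma fin_supp_brNat_basis [intro]: "fin_supp (brNat_basis deg pair d v p)"
  unfolding brNat_basis_def Imap_def liftmap_def by (intro fin_supp_lin) auto

lemma br_eq_ext2:
  assumes "fin_supp r" "fin_supp q"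
  shows "br deg pair d r q = ext2 (br_basis deg pair d) r q"
  unfolding br_def dbr_def mult_def using assms
  by (subst lin_ext2) (auto simp: mult_dbr_basis[unfolded mult_def])

lemma brNat_eq_ext2:
  fixes r :: "'b list \<Rightarrow> 'k::field"
  assumes "fin_supp r" "fin_supp \<omega>"
  shows "brNat deg pair d r \<omega> = ext2 (brNat_basis deg pair d) r \<omega>"
proof -
  let ?L = "\<lambda>(b, x). vec (b, x, []) (1::'k)"
  let ?I = "\<lambda>(b, x, c). (\<lambda>z. vec (b @ [x], c) 1 z - vec (b, x # c) (1::'k) z)"
  let ?g = "\<lambda>p. lin ?I (?L p)"
  have lift: "Imap (liftmap \<omega>) = lin ?g \<omega>"
    unfolding Imap_def liftmap_def using assms(2) by (rule lin_lin) auto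
  have "brNat deg pair d r \<omega> = lin (nat_basis deg) (ext2 (brOm_basis deg pair d) r (lin ?g \<omega>))"
    unfolding brNat_def brOm_def lift using assms by (intro natmap_Jmap_eq_lin fin_supp_ext2) auto
  also have "\<dots> = ext2 (\<lambda>a p. lin (\<lambda>b. lin (nat_basis deg) (brOm_basis deg pair d a b)) (?g p)) r \<omega>"
    using assms by (subst lin_ext2, auto, subst ext2_lin_right) (auto intro!: fin_supp_lin)
  also have "\<dots> = ext2 (brNat_basis deg pair d) r \<omega>"
    unfolding brNat_basis_def Imap_def liftmap_def lin_vec mult_1_left
    by (rule arg_cong[where f="\<lambda>F. ext2 F r \<omega>"], rule ext, rule ext, rule lin_lin[symmetric])
       (auto intro!: fin_supp_lin)
  finally show ?thesis .
qed

lemma nat_basis_snoc: "nat_basis deg (u @ [x], []) z = nat_basis deg (u, [x]) z + vec (u, x) 1 z"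
proof -
  have "nat_basis deg (u @ [x], []) z
      = (\<Sum>t<length u. nat_term deg (u @ [x]) [] t z) + nat_term deg (u @ [x]) [] (length u) z"
    by (simp add: nat_basis_def)
  also have "(\<Sum>t<length u. nat_term deg (u @ [x]) [] t z) = (\<Sum>t<length u. nat_term deg u [x] t z)"
    by (rule sum.cong) (auto simp: nat_term_def nth_append)
  also have "nat_term deg (u @ [x]) [] (length u) z = vec (u, x) 1 z"
    by (simp add: nat_term_def)
  finally show ?thesis by (simp add: nat_basis_def)
qed

lemma nat_basis_append:
  "nat_basis deg (b @ V, []) z
   = nat_basis deg (b, V) z + (\<Sum>s<length V. nat_term deg (b @ V) [] (length b + s) z)"
proof -
  have "nat_basis deg (b @ V, []) z
      = (\<Sum>t<length b. nat_term deg (b @ V) [] t z) + (\<Sum>s<length V. nat_term deg (b @ V) [] (length b + s) z)"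
    by (simp add: nat_basis_def sum_lessThan_add)
  also have "(\<Sum>t<length b. nat_term deg (b @ V) [] t z) = (\<Sum>t<length b. nat_term deg b V t z)"
    by (rule sum.cong) (auto simp: nat_term_def nth_append)
  finally show ?thesis by (simp add: nat_basis_def)
qed

lemma dbr_coeff_snoc:
  "j < length b \<Longrightarrow> dbr_coeff deg pair d v (b @ [x]) i j = dbr_coeff deg pair d v b i j"
  by (simp add: dbr_coeff_def nth_append)

lemma dbr_word_snoc: "j < length b \<Longrightarrow> dbr_word v (b @ [x]) i j = dbr_word v b i j @ [x]"
  by (simp add: dbr_word_def)

lemma dbr_word_last: "dbr_word v (b @ [x]) i (length b) = b @ cyclic_remove v i"
  by (simp add: dbr_word_def cyclic_remove_def)

lemma dbr_word_single: "dbr_word v [x] i 0 = cyclic_remove v i"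
  by (simp add: dbr_word_def cyclic_remove_def)

lemma length_cyclic_remove: "i < length v \<Longrightarrow> length (cyclic_remove v i) = length v - 1"
  by (simp add: cyclic_remove_def)

lemma dbr_coeff_last:
  fixes pair :: "'b \<Rightarrow> 'b \<Rightarrow> 'k::field"
  shows "dbr_coeff deg pair d v (b @ [x]) i (length b)
   = Defs.sgn (wdeg deg b * (wdeg deg v + (2 - d))) * dbr_coeff deg pair d v [x] i 0"
proof -
  have "Defs.sgn (deg (v ! i) + (wdeg deg v + d) * wdeg deg b
                  + (wdeg deg (take i v) + sdeg deg x + d) * wdeg deg (drop (Suc i) v))
     = (Defs.sgn (wdeg deg b * (wdeg deg v + (2 - d)))
        * Defs.sgn (deg (v ! i) + (wdeg deg (take i v) + sdeg deg x + d) * wdeg deg (drop (Suc i) v)) :: 'k)"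
    unfolding sgn_add[symmetric] by (rule sgn_parity) (simp add: algebra_simps)
  then show ?thesis by (simp add: dbr_coeff_def)
qed

lemma lin_nat_basis_brOm_basis:
  "lin (nat_basis deg) (brOm_basis deg pair d v (p, q)) z =
      (\<Sum>i<length v. \<Sum>j<length p. dbr_coeff deg pair d v p i j * nat_basis deg (dbr_word v p i j, q) z)
    + (\<Sum>i<length v. \<Sum>j<length q. (Defs.sgn (wdeg deg p * (wdeg deg v + (2 - d))) * dbr_coeff deg pair d v q i j)
                                     * nat_basis deg (p, dbr_word v q i j) z)"
  unfolding brOm_basis_eq
  by (subst lin_add) (auto simp: lin_sum_vec2 intro!: fin_supp_sum)

lemma brNat_basis_Pair:
  "brNat_basis deg pair d v (b, x) = (\<lambda>z. lin (nat_basis deg) (brOm_basis deg pair d v (b @ [x], [])) z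
                                         - lin (nat_basis deg) (brOm_basis deg pair d v (b, [x])) z)"
  by (simp add: brNat_basis_def liftmap_def Imap_def lin_diff fin_supp_brOm_basis)

lemma brNat_basis_eq:
  fixes pair :: "'b \<Rightarrow> 'b \<Rightarrow> 'k::field"
  shows "brNat_basis deg pair d v (b, x) z =
     (\<Sum>i<length v. \<Sum>j<length b. vec (dbr_word v b i j, x) (dbr_coeff deg pair d v b i j) z)
   + (\<Sum>i<length v. dbr_coeff deg pair d v (b @ [x]) i (length b)
                     * (\<Sum>s<length v - 1. nat_term deg (b @ cyclic_remove v i) [] (length b + s) z))"
proof -
  let ?c = "dbr_coeff deg pair d v"
  let ?s = "Defs.sgn (wdeg deg b * (wdeg deg v + (2 - d))) :: 'k"
  have pairs_in_b: "(\<Sum>j<length b. ?c (b @ [x]) i j * nat_basis deg (dbr_word v (b @ [x]) i j, []) z)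
     = (\<Sum>j<length b. ?c b i j * nat_basis deg (dbr_word v b i j, [x]) z)
       + (\<Sum>j<length b. vec (dbr_word v b i j, x) (?c b i j) z)" for i
    unfolding sum.distrib[symmetric]
    by (rule sum.cong) (simp_all add: dbr_coeff_snoc dbr_word_snoc nat_basis_snoc distrib_left vec_scale)
  have pairs_with_x: "?c (b @ [x]) i (length b) * nat_basis deg (dbr_word v (b @ [x]) i (length b), []) z
     = ?s * ?c [x] i 0 * nat_basis deg (b, dbr_word v [x] i 0) z
       + ?c (b @ [x]) i (length b) * (\<Sum>s<length v - 1. nat_term deg (b @ cyclic_remove v i) [] (length b + s) z)"
    if "i < length v" for i
    using that by (simp add: dbr_word_last dbr_word_single nat_basis_append length_cyclic_remove
                             dbr_coeff_last distrib_left)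
  have "brNat_basis deg pair d v (b, x) z =
      (\<Sum>i<length v. (\<Sum>j<length b. ?c (b @ [x]) i j * nat_basis deg (dbr_word v (b @ [x]) i j, []) z)
          + ?c (b @ [x]) i (length b) * nat_basis deg (dbr_word v (b @ [x]) i (length b), []) z)
    - ((\<Sum>i<length v. \<Sum>j<length b. ?c b i j * nat_basis deg (dbr_word v b i j, [x]) z)
       + (\<Sum>i<length v. ?s * ?c [x] i 0 * nat_basis deg (b, dbr_word v [x] i 0) z))"
    unfolding brNat_basis_Pair lin_nat_basis_brOm_basis by simp
  also have "\<dots> = (\<Sum>i<length v. (\<Sum>j<length b. ?c b i j * nat_basis deg (dbr_word v b i j, [x]) z)
          + (\<Sum>j<length b. vec (dbr_word v b i j, x) (?c b i j) z)
          + (?s * ?c [x] i 0 * nat_basis deg (b, dbr_word v [x] i 0) z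
       + ?c (b @ [x]) i (length b) * (\<Sum>s<length v - 1. nat_term deg (b @ cyclic_remove v i) [] (length b + s) z)))
    - ((\<Sum>i<length v. \<Sum>j<length b. ?c b i j * nat_basis deg (dbr_word v b i j, [x]) z)
       + (\<Sum>i<length v. ?s * ?c [x] i 0 * nat_basis deg (b, dbr_word v [x] i 0) z))"
    by (intro arg_cong2[where f="(-)"] refl sum.cong) (simp_all add: pairs_in_b pairs_with_x)
  also have "\<dots> = (\<Sum>i<length v. \<Sum>j<length b. vec (dbr_word v b i j, x) (?c b i j) z)
   + (\<Sum>i<length v. ?c (b @ [x]) i (length b) * (\<Sum>s<length v - 1. nat_term deg (b @ cyclic_remove v i) [] (length b + s) z))"
    by (simp add: sum.distrib)
  finally show ?thesis .
qed

lemma dbr_coeff_Cons: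
  fixes pair :: "'b \<Rightarrow> 'b \<Rightarrow> 'k::field"
  assumes pair_deg: "\<forall>a b. pair a b \<noteq> 0 \<longrightarrow> deg a + deg b = d"
    and i: "i < length v" and j: "j < length b"
  shows "dbr_coeff deg pair d v b i j * Defs.sgn (sdeg deg x * wdeg deg (dbr_word v b i j))
       = Defs.sgn (sdeg deg x * wdeg deg b) * dbr_coeff deg pair d v (x # b) i (Suc j)"
proof (cases "pair (v ! i) (b ! j) = 0")
  case True
  then show ?thesis by (simp add: dbr_coeff_def)
next
  case False
  then have d: "d = deg (v ! i) + deg (b ! j)" using pair_deg by auto
  show ?thesis
    unfolding dbr_coeff_def nth_Cons_Suc take_Suc_Cons wdeg_Cons
    by (rule sgn_transfer) (simp add: wdeg_split[OF i, of deg] wdeg_split[OF j, of deg] d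
        dbr_word_def sdeg_def algebra_simps even_add even_mult_iff)
qed

lemma dbr_coeff_snoc_last:
  fixes pair :: "'b \<Rightarrow> 'b \<Rightarrow> 'k::field"
  assumes pair_deg: "\<forall>a b. pair a b \<noteq> 0 \<longrightarrow> deg a + deg b = d"
    and i: "i < length v"
  shows "dbr_coeff deg pair d v (b @ [x]) i (length b) * Defs.sgn (wdeg deg (cyclic_remove v i) * wdeg deg b)
       = Defs.sgn (sdeg deg x * wdeg deg b) * dbr_coeff deg pair d v (x # b) i 0"
proof (cases "pair (v ! i) x = 0")
  case True
  then show ?thesis by (simp add: dbr_coeff_def)
next
  case False
  then have d: "d = deg (v ! i) + deg x" using pair_deg by auto
  show ?thesis
    unfolding dbr_coeff_def nth_append_length nth_Cons_0 take_0 take_all[OF order_refl]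
    by (rule sgn_transfer) (simp add: wdeg_split[OF i, of deg] d cyclic_remove_def
        sdeg_def algebra_simps even_add even_mult_iff)
qed

definition signed_rotation :: "('b \<Rightarrow> int) \<Rightarrow> 'b list \<Rightarrow> nat \<Rightarrow> 'b list \<Rightarrow> 'k::field" where
  "signed_rotation deg u t =
     vec (drop t u @ take t u) (Defs.sgn (wdeg deg (drop t u) * wdeg deg (take t u)))"

lemma beta_nat_term:
  assumes t: "t < length u"
  shows "lin (beta_basis deg) (nat_term deg u [] t) z
       = signed_rotation deg u (Suc t) z - (signed_rotation deg u t z :: 'k::field)"
proof -
  have take: "take (Suc t) u = take t u @ [u ! t]" using t by (rule take_Suc_conv_app_nth)
  have drop: "drop t u = u ! t # drop (Suc t) u" using t by (rule Cons_nth_drop_Suc[symmetric])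
  have "Defs.sgn (wdeg deg (drop (Suc t) u) * (wdeg deg (take t u) + sdeg deg (u ! t)))
      * Defs.sgn (sdeg deg (u ! t) * (wdeg deg (drop (Suc t) u) + wdeg deg (take t u)))
      = (Defs.sgn ((sdeg deg (u ! t) + wdeg deg (drop (Suc t) u)) * wdeg deg (take t u)) :: 'k)"
    unfolding sgn_add[symmetric] by (rule sgn_parity) (simp add: algebra_simps)
  then show ?thesis
    unfolding nat_term_def lin_vec signed_rotation_def beta_basis_def take drop
    by (simp add: vec_def algebra_simps)
qed

lemma beta_nat_term_telescope:
  assumes "m + n \<le> length u"
  shows "lin (beta_basis deg) (\<lambda>z. \<Sum>s<n. nat_term deg u [] (m + s) z) z
     = signed_rotation deg u (m + n) z - (signed_rotation deg u m z :: 'k::field)"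
proof -
  have "lin (beta_basis deg) (\<lambda>z. \<Sum>s<n. nat_term deg u [] (m + s) z) z
      = (\<Sum>s<n. lin (beta_basis deg) (nat_term deg u [] (m + s)) z)"
    by (subst lin_sum) (auto simp: nat_term_def)
  also have "\<dots> = (\<Sum>s<n. signed_rotation deg u (m + Suc s) z - signed_rotation deg u (m + s) z)"
    using assms by (intro sum.cong refl) (simp add: beta_nat_term)
  also have "\<dots> = signed_rotation deg u (m + n) z - signed_rotation deg u m z"
    using sum_lessThan_telescope[of "\<lambda>s. signed_rotation deg u (m + s) z" n] by simp
  finally show ?thesis .
qed

lemma br_basis_snoc:
  "br_basis deg pair d v (b @ [x]) z = (\<Sum>i<length v.
      (\<Sum>j<length b. vec (dbr_word v b i j @ [x]) (dbr_coeff deg pair d v b i j) z)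
    + vec (b @ cyclic_remove v i) (dbr_coeff deg pair d v (b @ [x]) i (length b)) z)"
  unfolding br_basis_def by (simp add: dbr_word_snoc dbr_coeff_snoc dbr_word_last)

lemma br_basis_Cons:
  "br_basis deg pair d v (x # b) z = (\<Sum>i<length v.
      vec (cyclic_remove v i @ b) (dbr_coeff deg pair d v (x # b) i 0) z
    + (\<Sum>j<length b. vec (x # dbr_word v b i j) (dbr_coeff deg pair d v (x # b) i (Suc j)) z))"
  unfolding br_basis_def length_Cons sum.lessThan_Suc_shift
  by (simp add: dbr_word_def cyclic_remove_def)

lemma beta_dbr_word:
  fixes pair :: "'b \<Rightarrow> 'b \<Rightarrow> 'k::field"
  assumes pair_deg: "\<forall>a b. pair a b \<noteq> 0 \<longrightarrow> deg a + deg b = d"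
    and "i < length v" "j < length b"
  shows "dbr_coeff deg pair d v b i j * beta_basis deg (dbr_word v b i j, x) z
       = vec (dbr_word v b i j @ [x]) (dbr_coeff deg pair d v b i j) z
         - Defs.sgn (sdeg deg x * wdeg deg b) * vec (x # dbr_word v b i j) (dbr_coeff deg pair d v (x # b) i (Suc j)) z"
  using dbr_coeff_Cons[OF assms, where x = x] by (simp add: beta_basis_def vec_def algebra_simps)

lemma beta_rotation_tail:
  fixes pair :: "'b \<Rightarrow> 'b \<Rightarrow> 'k::field"
  assumes pair_deg: "\<forall>a b. pair a b \<noteq> 0 \<longrightarrow> deg a + deg b = d"
    and i: "i < length v"
  shows "dbr_coeff deg pair d v (b @ [x]) i (length b)
         * lin (beta_basis deg) (\<lambda>z. \<Sum>s<length v - 1. nat_term deg (b @ cyclic_remove v i) [] (length b + s) z) z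
       = vec (b @ cyclic_remove v i) (dbr_coeff deg pair d v (b @ [x]) i (length b)) z
         - Defs.sgn (sdeg deg x * wdeg deg b) * vec (cyclic_remove v i @ b) (dbr_coeff deg pair d v (x # b) i 0) z"
proof -
  let ?u = "b @ cyclic_remove v i"
  have "length b + (length v - 1) = length ?u" using length_cyclic_remove[OF i] by simp
  then have "lin (beta_basis deg) (\<lambda>z. \<Sum>s<length v - 1. nat_term deg ?u [] (length b + s) z) z
      = signed_rotation deg ?u (length ?u) z - (signed_rotation deg ?u (length b) z :: 'k)"
    using beta_nat_term_telescope[of "length b" "length v - 1" ?u deg z] by simp
  also have "\<dots> = vec ?u 1 z - vec (cyclic_remove v i @ b) (Defs.sgn (wdeg deg (cyclic_remove v i) * wdeg deg b)) z"
    by (simp add: signed_rotation_def)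
  finally show ?thesis
    using dbr_coeff_snoc_last[OF pair_deg i, where b = b and x = x] by (simp add: right_diff_distrib vec_scale)
qed

lemma beta_brNat_basis:
  fixes pair :: "'b \<Rightarrow> 'b \<Rightarrow> 'k::field"
  assumes pair_deg: "\<forall>a b. pair a b \<noteq> 0 \<longrightarrow> deg a + deg b = d"
  shows "lin (beta_basis deg) (brNat_basis deg pair d v p) = lin (br_basis deg pair d v) (beta_basis deg p)"
proof
  fix z
  obtain b x where p: "p = (b, x)" by (cases p)
  let ?\<sigma> = "Defs.sgn (sdeg deg x * wdeg deg b) :: 'k"
  let ?c = "dbr_coeff deg pair d v"
  define F :: "'b list \<times> 'b \<Rightarrow> 'k" where "F = (\<lambda>z. \<Sum>i<length v. \<Sum>j<length b. vec (dbr_word v b i j, x) (?c b i j) z)"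
  define G :: "nat \<Rightarrow> 'b list \<times> 'b \<Rightarrow> 'k" where "G i = (\<lambda>z. \<Sum>s<length v - 1. nat_term deg (b @ cyclic_remove v i) [] (length b + s) z)" for i
  have F: "fin_supp F" unfolding F_def by (intro fin_supp_sum) auto
  have G: "fin_supp (G i)" for i unfolding G_def nat_term_def by (intro fin_supp_sum) auto
  have tail: "?c (b @ [x]) i (length b) * lin (beta_basis deg) (G i) z
      = vec (b @ cyclic_remove v i) (?c (b @ [x]) i (length b)) z
        - ?\<sigma> * vec (cyclic_remove v i @ b) (?c (x # b) i 0) z" if "i < length v" for i
    unfolding G_def by (rule beta_rotation_tail[OF pair_deg that])
  have FG: "fin_supp (\<lambda>z. \<Sum>i<length v. ?c (b @ [x]) i (length b) * G i z)"
    using G by (intro fin_supp_sum fin_supp_scale) auto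
  have "lin (beta_basis deg) (brNat_basis deg pair d v p) z
      = lin (beta_basis deg) (\<lambda>z. F z + (\<Sum>i<length v. ?c (b @ [x]) i (length b) * G i z)) z"
    unfolding p F_def G_def brNat_basis_eq ..
  also have "\<dots> = (\<Sum>i<length v. (\<Sum>j<length b. ?c b i j * beta_basis deg (dbr_word v b i j, x) z)
                   + ?c (b @ [x]) i (length b) * lin (beta_basis deg) (G i) z)"
    unfolding lin_add[OF F FG] lin_sum_scale[OF finite_lessThan G] unfolding F_def
    by (simp add: lin_sum_vec2 sum.distrib)
  also have "\<dots> = (\<Sum>i<length v.
        ((\<Sum>j<length b. vec (dbr_word v b i j @ [x]) (?c b i j) z) + vec (b @ cyclic_remove v i) (?c (b @ [x]) i (length b)) z)
      - ?\<sigma> * (vec (cyclic_remove v i @ b) (?c (x # b) i 0) z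
                + (\<Sum>j<length b. vec (x # dbr_word v b i j) (?c (x # b) i (Suc j)) z)))"
    by (intro sum.cong refl) (simp add: tail beta_dbr_word[OF pair_deg] sum_subtractf sum_distrib_left distrib_left)
  also have "\<dots> = br_basis deg pair d v (b @ [x]) z - ?\<sigma> * br_basis deg pair d v (x # b) z"
    unfolding br_basis_snoc br_basis_Cons by (simp add: sum_subtractf sum_distrib_left)
  also have "\<dots> = lin (br_basis deg pair d v) (beta_basis deg p) z"
    unfolding p beta_basis_def by (subst lin_diff) simp_all
  finally show "lin (beta_basis deg) (brNat_basis deg pair d v p) z = lin (br_basis deg pair d v) (beta_basis deg p) z" .
qed

lemma dbar_term_dbr_word_middle:
  fixes pair :: "'b \<Rightarrow> 'b \<Rightarrow> 'k::field"
  assumes pair_deg: "\<forall>a b. pair a b \<noteq> 0 \<longrightarrow> deg a + deg b = d"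
    and V: "V1 @ e # V2 = Dv @ Tv"
  shows "dbr_coeff deg pair d (Tv @ y # Dv) (A @ c # B) (length Tv) (length A) * dbar_term deg (A @ (Dv @ Tv) @ B) (length A + length V1) z
    = dbar_sign deg (A @ c # B) (length A) * dbr_coeff deg pair d (Tv @ y # Dv) ((B @ A) @ [c]) (length Tv) (length B + length A)
      * nat_term deg ((B @ A) @ (Dv @ Tv)) [] (length B + length A + length V1) z"
proof (cases "pair y c = 0")
  case True
  then show ?thesis by (simp add: dbr_coeff_def)
next
  case False
  then have d: "d = deg y + deg c" using pair_deg by auto
  have V2_deg: "wdeg deg V2 = wdeg deg Dv + wdeg deg Tv - wdeg deg V1 - sdeg deg e"
    using arg_cong[OF V, of "wdeg deg"] by simp
  let ?wv = "wdeg deg Tv + sdeg deg y + wdeg deg Dv"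
  have lhs_coeff: "dbr_coeff deg pair d (Tv @ y # Dv) (A @ c # B) (length Tv) (length A)
     = Defs.sgn (deg y + (?wv + d) * wdeg deg A + (wdeg deg Tv + sdeg deg c + d) * wdeg deg Dv) * pair y c"
    by (simp add: dbr_coeff_def add.assoc)
  have rhs_coeff: "dbr_coeff deg pair d (Tv @ y # Dv) ((B @ A) @ [c]) (length Tv) (length B + length A)
     = Defs.sgn (deg y + (?wv + d) * (wdeg deg B + wdeg deg A) + (wdeg deg Tv + sdeg deg c + d) * wdeg deg Dv) * pair y c"
    by (simp add: dbr_coeff_def nth_append add.assoc)
  have rhs_sign: "dbar_sign deg (A @ c # B) (length A) = Defs.sgn ((wdeg deg A + sdeg deg c) * wdeg deg B)"
    by (simp add: dbar_sign_def add.assoc)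
  have lhs_term: "dbar_term deg (A @ (Dv @ Tv) @ B) (length A + length V1) z
     = vec (V2 @ B @ A @ V1, e) (Defs.sgn ((wdeg deg A + wdeg deg V1 + sdeg deg e) * (wdeg deg V2 + wdeg deg B))) z"
    unfolding V[symmetric] by (simp add: dbar_term_def dbar_sign_def cyclic_remove_def nth_append add.assoc)
  have rhs_term: "nat_term deg ((B @ A) @ (Dv @ Tv)) [] (length B + length A + length V1) z
     = vec (V2 @ B @ A @ V1, e) (Defs.sgn (wdeg deg V2 * (wdeg deg B + wdeg deg A + wdeg deg V1 + sdeg deg e))) z"
    unfolding V[symmetric] by (simp add: nat_term_def nth_append add.assoc)
  have parity: "even ((deg y + (?wv + d) * wdeg deg A + (wdeg deg Tv + sdeg deg c + d) * wdeg deg Dv)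
       + ((wdeg deg A + wdeg deg V1 + sdeg deg e) * (wdeg deg V2 + wdeg deg B))
     - ((wdeg deg A + sdeg deg c) * wdeg deg B
       + (deg y + (?wv + d) * (wdeg deg B + wdeg deg A) + (wdeg deg Tv + sdeg deg c + d) * wdeg deg Dv)
       + wdeg deg V2 * (wdeg deg B + wdeg deg A + wdeg deg V1 + sdeg deg e)))"
    unfolding V2_deg d by (simp add: sdeg_def algebra_simps even_add even_mult_iff)
  show ?thesis
    by (simp only: lhs_coeff rhs_coeff rhs_sign lhs_term rhs_term vec_scale sgn_transfer3[OF parity])
qed

lemma dbar_term_dbr_word_prefix:
  fixes pair :: "'b \<Rightarrow> 'b \<Rightarrow> 'k::field"
  assumes pair_deg: "\<forall>a b. pair a b \<noteq> 0 \<longrightarrow> deg a + deg b = d"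
  shows "dbr_coeff deg pair d (Tv @ y # Dv) (P @ a # Q @ c # R) (length Tv) (length P + 1 + length Q)
        * dbar_term deg ((P @ a # Q) @ (Dv @ Tv) @ R) (length P) z
    = dbar_sign deg (P @ a # Q @ c # R) (length P)
      * vec (Q @ (Dv @ Tv) @ R @ P, a) (dbr_coeff deg pair d (Tv @ y # Dv) (Q @ c # R @ P) (length Tv) (length Q)) z"
proof (cases "pair y c = 0")
  case True
  then show ?thesis by (simp add: dbr_coeff_def nth_append vec_def)
next
  case False
  then have d: "d = deg y + deg c" using pair_deg by auto
  let ?wv = "wdeg deg Tv + sdeg deg y + wdeg deg Dv"
  have lhs_coeff: "dbr_coeff deg pair d (Tv @ y # Dv) (P @ a # Q @ c # R) (length Tv) (length P + 1 + length Q)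
     = Defs.sgn (deg y + (?wv + d) * (wdeg deg P + sdeg deg a + wdeg deg Q) + (wdeg deg Tv + sdeg deg c + d) * wdeg deg Dv) * pair y c"
    by (simp add: dbr_coeff_def nth_append add.assoc)
  have rhs_coeff: "dbr_coeff deg pair d (Tv @ y # Dv) (Q @ c # R @ P) (length Tv) (length Q)
     = Defs.sgn (deg y + (?wv + d) * wdeg deg Q + (wdeg deg Tv + sdeg deg c + d) * wdeg deg Dv) * pair y c"
    by (simp add: dbr_coeff_def nth_append add.assoc)
  have rhs_sign: "dbar_sign deg (P @ a # Q @ c # R) (length P) = Defs.sgn ((wdeg deg P + sdeg deg a) * (wdeg deg Q + sdeg deg c + wdeg deg R))"
    by (simp add: dbar_sign_def add.assoc)
  have lhs_term: "dbar_term deg ((P @ a # Q) @ (Dv @ Tv) @ R) (length P) z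
     = vec (Q @ (Dv @ Tv) @ R @ P, a) (Defs.sgn ((wdeg deg P + sdeg deg a) * (wdeg deg Q + wdeg deg Dv + wdeg deg Tv + wdeg deg R))) z"
    by (simp add: dbar_term_def dbar_sign_def cyclic_remove_def nth_append add.assoc)
  have parity: "even ((deg y + (?wv + d) * (wdeg deg P + sdeg deg a + wdeg deg Q) + (wdeg deg Tv + sdeg deg c + d) * wdeg deg Dv)
       + ((wdeg deg P + sdeg deg a) * (wdeg deg Q + wdeg deg Dv + wdeg deg Tv + wdeg deg R))
     - ((wdeg deg P + sdeg deg a) * (wdeg deg Q + sdeg deg c + wdeg deg R)
       + (deg y + (?wv + d) * wdeg deg Q + (wdeg deg Tv + sdeg deg c + d) * wdeg deg Dv)))"
    unfolding d by (simp add: sdeg_def algebra_simps even_add even_mult_iff)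
  show ?thesis
    by (simp only: lhs_coeff rhs_coeff rhs_sign lhs_term vec_scale sgn_transfer[OF parity])
qed

lemma dbar_term_dbr_word_suffix:
  fixes pair :: "'b \<Rightarrow> 'b \<Rightarrow> 'k::field"
  assumes pair_deg: "\<forall>a b. pair a b \<noteq> 0 \<longrightarrow> deg a + deg b = d"
  shows "dbr_coeff deg pair d (Tv @ y # Dv) (P @ c # Q @ a # R) (length Tv) (length P)
        * dbar_term deg (P @ (Dv @ Tv) @ (Q @ a # R)) (length P + length (Dv @ Tv) + length Q) z
    = dbar_sign deg (P @ c # Q @ a # R) (length P + 1 + length Q)
      * vec ((R @ P) @ (Dv @ Tv) @ Q, a) (dbr_coeff deg pair d (Tv @ y # Dv) (R @ P @ c # Q) (length Tv) (length R + length P)) z"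
proof (cases "pair y c = 0")
  case True
  then show ?thesis by (simp add: dbr_coeff_def nth_append vec_def)
next
  case False
  then have d: "d = deg y + deg c" using pair_deg by auto
  let ?wv = "wdeg deg Tv + sdeg deg y + wdeg deg Dv"
  have lhs_coeff: "dbr_coeff deg pair d (Tv @ y # Dv) (P @ c # Q @ a # R) (length Tv) (length P)
     = Defs.sgn (deg y + (?wv + d) * wdeg deg P + (wdeg deg Tv + sdeg deg c + d) * wdeg deg Dv) * pair y c"
    by (simp add: dbr_coeff_def nth_append add.assoc)
  have rhs_coeff: "dbr_coeff deg pair d (Tv @ y # Dv) (R @ P @ c # Q) (length Tv) (length R + length P)
     = Defs.sgn (deg y + (?wv + d) * (wdeg deg R + wdeg deg P) + (wdeg deg Tv + sdeg deg c + d) * wdeg deg Dv) * pair y c"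
    by (simp add: dbr_coeff_def nth_append add.assoc)
  have rhs_sign: "dbar_sign deg (P @ c # Q @ a # R) (length P + 1 + length Q) = Defs.sgn ((wdeg deg P + sdeg deg c + wdeg deg Q + sdeg deg a) * wdeg deg R)"
    by (simp add: dbar_sign_def add.assoc)
  have lhs_term: "dbar_term deg (P @ (Dv @ Tv) @ (Q @ a # R)) (length P + length (Dv @ Tv) + length Q) z
     = vec ((R @ P) @ (Dv @ Tv) @ Q, a) (Defs.sgn ((wdeg deg P + wdeg deg Dv + wdeg deg Tv + wdeg deg Q + sdeg deg a) * wdeg deg R)) z"
    by (simp add: dbar_term_def dbar_sign_def cyclic_remove_def nth_append add.assoc)
  have parity: "even ((deg y + (?wv + d) * wdeg deg P + (wdeg deg Tv + sdeg deg c + d) * wdeg deg Dv)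
       + ((wdeg deg P + wdeg deg Dv + wdeg deg Tv + wdeg deg Q + sdeg deg a) * wdeg deg R)
     - ((wdeg deg P + sdeg deg c + wdeg deg Q + sdeg deg a) * wdeg deg R
       + (deg y + (?wv + d) * (wdeg deg R + wdeg deg P) + (wdeg deg Tv + sdeg deg c + d) * wdeg deg Dv)))"
    unfolding d by (simp add: sdeg_def algebra_simps even_add even_mult_iff)
  show ?thesis
    by (simp only: lhs_coeff rhs_coeff rhs_sign lhs_term vec_scale sgn_transfer[OF parity])
qed

lemma dbar_term_dbr_word_middle_nth:
  fixes pair :: "'b \<Rightarrow> 'b \<Rightarrow> 'k::field"
  assumes pair_deg: "\<forall>a b. pair a b \<noteq> 0 \<longrightarrow> deg a + deg b = d"
    and i: "i < length v" and j: "j < length w" and s: "s < length v - 1"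
  shows "dbr_coeff deg pair d v w i j * dbar_term deg (dbr_word v w i j) (j + s) z
    = dbar_sign deg w j * dbr_coeff deg pair d v (cyclic_remove w j @ [w ! j]) i (length w - 1)
      * nat_term deg (cyclic_remove w j @ cyclic_remove v i) [] (length w - 1 + s) z"
proof -
  obtain T y D where v: "v = T @ y # D" and li: "length T = i" using split_at_index[OF i] by blast
  obtain A c B where w: "w = A @ c # B" and lj: "length A = j" using split_at_index[OF j] by blast
  have "s < length (D @ T)" using s v li by simp
  then obtain V1 e V2 where V: "D @ T = V1 @ e # V2" and ls: "length V1 = s"
    using split_at_index by blast
  show ?thesis using dbar_term_dbr_word_middle[OF pair_deg V[symmetric], of y A c B z]
    unfolding v w li[symmetric] lj[symmetric] ls[symmetric]
    by (simp add: dbr_word_def cyclic_remove_def add.commute)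
qed

lemma dbar_term_dbr_word_prefix_nth:
  fixes pair :: "'b \<Rightarrow> 'b \<Rightarrow> 'k::field"
  assumes pair_deg: "\<forall>a b. pair a b \<noteq> 0 \<longrightarrow> deg a + deg b = d"
    and i: "i < length v" and lr: "l + 1 + r < length w"
  shows "dbr_coeff deg pair d v w i (l + 1 + r) * dbar_term deg (dbr_word v w i (l + 1 + r)) l z
    = dbar_sign deg w l * vec (dbr_word v (cyclic_remove w l) i r, w ! l)
                               (dbr_coeff deg pair d v (cyclic_remove w l) i r) z"
proof -
  obtain T y D where v: "v = T @ y # D" and li: "length T = i" using split_at_index[OF i] by blast
  have "l < length w" using lr by simp
  then obtain P a W where w1: "w = P @ a # W" and lp: "length P = l" using split_at_index by blast
  have "r < length W" using lr w1 lp by simp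
  then obtain Q c R where w2: "W = Q @ c # R" and lq: "length Q = r" using split_at_index by blast
  show ?thesis using dbar_term_dbr_word_prefix[OF pair_deg, of T y D P a Q c R z]
    unfolding v w1 w2 li[symmetric] lp[symmetric] lq[symmetric]
    by (simp add: dbr_word_def cyclic_remove_def add.commute nth_append)
qed

lemma dbar_term_dbr_word_suffix_nth:
  fixes pair :: "'b \<Rightarrow> 'b \<Rightarrow> 'k::field"
  assumes pair_deg: "\<forall>a b. pair a b \<noteq> 0 \<longrightarrow> deg a + deg b = d"
    and i: "i < length v" and lr: "q + 1 + r < length w"
  shows "dbr_coeff deg pair d v w i q * dbar_term deg (dbr_word v w i q) (q + (length v - 1) + r) z
    = dbar_sign deg w (q + 1 + r)
      * vec (dbr_word v (cyclic_remove w (q + 1 + r)) i (length w - 1 - (q + 1 + r) + q), w ! (q + 1 + r))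
          (dbr_coeff deg pair d v (cyclic_remove w (q + 1 + r)) i (length w - 1 - (q + 1 + r) + q)) z"
proof -
  obtain T y D where v: "v = T @ y # D" and li: "length T = i" using split_at_index[OF i] by blast
  have "q < length w" using lr by simp
  then obtain P c W where w1: "w = P @ c # W" and lp: "length P = q" using split_at_index by blast
  have "r < length W" using lr w1 lp by simp
  then obtain Q a R where w2: "W = Q @ a # R" and lq: "length Q = r" using split_at_index by blast
  show ?thesis using dbar_term_dbr_word_suffix[OF pair_deg, of T y D P c Q a R z]
    unfolding v w1 w2 li[symmetric] lp[symmetric] lq[symmetric]
    by (simp add: dbr_word_def cyclic_remove_def add.commute nth_append)
qed

lemma dbar_basis_dbr_word:
  assumes "i < length v" "j < length w"
  shows "dbar_basis deg (dbr_word v w i j) z =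
      (\<Sum>t<j. dbar_term deg (dbr_word v w i j) t z)
    + (\<Sum>s<length v - 1. dbar_term deg (dbr_word v w i j) (j + s) z)
    + (\<Sum>r<length w - 1 - j. dbar_term deg (dbr_word v w i j) (j + (length v - 1) + r) z)"
proof -
  have "length (dbr_word v w i j) = j + (length v - 1) + (length w - 1 - j)"
    using assms by (simp add: dbr_word_def)
  then show ?thesis by (simp only: dbar_basis_def sum_lessThan_add)
qed

lemma brNat_basis_cyclic_remove:
  assumes "l < length w"
  shows "brNat_basis deg pair d v (cyclic_remove w l, w ! l) z =
      (\<Sum>i<length v.
          (\<Sum>j<length w - 1 - l. vec (dbr_word v (cyclic_remove w l) i j, w ! l)
                                    (dbr_coeff deg pair d v (cyclic_remove w l) i j) z)
        + (\<Sum>q<l. vec (dbr_word v (cyclic_remove w l) i (length w - 1 - l + q), w ! l)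
                      (dbr_coeff deg pair d v (cyclic_remove w l) i (length w - 1 - l + q)) z))
    + (\<Sum>i<length v. dbr_coeff deg pair d v (cyclic_remove w l @ [w ! l]) i (length w - 1)
          * (\<Sum>s<length v - 1. nat_term deg (cyclic_remove w l @ cyclic_remove v i) [] (length w - 1 + s) z))"
proof -
  have len: "length (cyclic_remove w l) = (length w - 1 - l) + l" "length w - 1 - l + l = length w - 1"
    using assms by (auto simp: cyclic_remove_def)
  show ?thesis
    unfolding brNat_basis_eq len(1) sum_lessThan_add by (simp only: len(2))
qed

lemma dbar_br_basis_middle:
  fixes pair :: "'b \<Rightarrow> 'b \<Rightarrow> 'k::field"
  assumes pair_deg: "\<forall>a b. pair a b \<noteq> 0 \<longrightarrow> deg a + deg b = d"
    and i: "i < length v"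
  shows "(\<Sum>j<length w. dbr_coeff deg pair d v w i j * (\<Sum>s<length v - 1. dbar_term deg (dbr_word v w i j) (j + s) z))
    = (\<Sum>l<length w. dbar_sign deg w l * (dbr_coeff deg pair d v (cyclic_remove w l @ [w ! l]) i (length w - 1)
          * (\<Sum>s<length v - 1. nat_term deg (cyclic_remove w l @ cyclic_remove v i) [] (length w - 1 + s) z)))"
  using dbar_term_dbr_word_middle_nth[OF pair_deg i]
  by (intro sum.cong refl) (simp add: sum_distrib_left mult.assoc)

lemma dbar_br_basis_prefix:
  fixes pair :: "'b \<Rightarrow> 'b \<Rightarrow> 'k::field"
  assumes pair_deg: "\<forall>a b. pair a b \<noteq> 0 \<longrightarrow> deg a + deg b = d"
    and i: "i < length v"
  shows "(\<Sum>j<length w. dbr_coeff deg pair d v w i j * (\<Sum>t<j. dbar_term deg (dbr_word v w i j) t z))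
    = (\<Sum>l<length w. dbar_sign deg w l * (\<Sum>j<length w - 1 - l.
          vec (dbr_word v (cyclic_remove w l) i j, w ! l) (dbr_coeff deg pair d v (cyclic_remove w l) i j) z))"
proof -
  have "(\<Sum>j<length w. dbr_coeff deg pair d v w i j * (\<Sum>t<j. dbar_term deg (dbr_word v w i j) t z))
      = (\<Sum>j<length w. \<Sum>t<j. dbr_coeff deg pair d v w i j * dbar_term deg (dbr_word v w i j) t z)"
    by (simp add: sum_distrib_left)
  also have "\<dots> = (\<Sum>t<length w. \<Sum>r<length w - 1 - t.
      dbr_coeff deg pair d v w i (t + 1 + r) * dbar_term deg (dbr_word v w i (t + 1 + r)) t z)"
    by (rule sum_triangle_reindex)
  also have "\<dots> = (\<Sum>l<length w. dbar_sign deg w l * (\<Sum>j<length w - 1 - l.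
      vec (dbr_word v (cyclic_remove w l) i j, w ! l) (dbr_coeff deg pair d v (cyclic_remove w l) i j) z))"
    unfolding sum_distrib_left
    by (intro sum.cong refl) (use dbar_term_dbr_word_prefix_nth[OF pair_deg i] in simp)
  finally show ?thesis .
qed

lemma dbar_br_basis_suffix:
  fixes pair :: "'b \<Rightarrow> 'b \<Rightarrow> 'k::field"
  assumes pair_deg: "\<forall>a b. pair a b \<noteq> 0 \<longrightarrow> deg a + deg b = d"
    and i: "i < length v"
  shows "(\<Sum>j<length w. dbr_coeff deg pair d v w i j
           * (\<Sum>r<length w - 1 - j. dbar_term deg (dbr_word v w i j) (j + (length v - 1) + r) z))
    = (\<Sum>l<length w. dbar_sign deg w l * (\<Sum>q<l.
          vec (dbr_word v (cyclic_remove w l) i (length w - 1 - l + q), w ! l)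
              (dbr_coeff deg pair d v (cyclic_remove w l) i (length w - 1 - l + q)) z))"
proof -
  have "(\<Sum>l<length w. dbar_sign deg w l * (\<Sum>q<l.
          vec (dbr_word v (cyclic_remove w l) i (length w - 1 - l + q), w ! l)
              (dbr_coeff deg pair d v (cyclic_remove w l) i (length w - 1 - l + q)) z))
      = (\<Sum>l<length w. \<Sum>q<l. dbar_sign deg w l *
          vec (dbr_word v (cyclic_remove w l) i (length w - 1 - l + q), w ! l)
              (dbr_coeff deg pair d v (cyclic_remove w l) i (length w - 1 - l + q)) z)"
    by (simp add: sum_distrib_left)
  also have "\<dots> = (\<Sum>q<length w. \<Sum>r<length w - 1 - q. dbar_sign deg w (q + 1 + r) *
      vec (dbr_word v (cyclic_remove w (q + 1 + r)) i (length w - 1 - (q + 1 + r) + q), w ! (q + 1 + r))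
          (dbr_coeff deg pair d v (cyclic_remove w (q + 1 + r)) i (length w - 1 - (q + 1 + r) + q)) z)"
    by (rule sum_triangle_reindex)
  also have "\<dots> = (\<Sum>q<length w. \<Sum>r<length w - 1 - q.
      dbr_coeff deg pair d v w i q * dbar_term deg (dbr_word v w i q) (q + (length v - 1) + r) z)"
    by (intro sum.cong refl) (use dbar_term_dbr_word_suffix_nth[OF pair_deg i] in simp)
  finally show ?thesis by (simp add: sum_distrib_left)
qed

lemma dbar_br_basis:
  fixes pair :: "'b \<Rightarrow> 'b \<Rightarrow> 'k::field"
  assumes pair_deg: "\<forall>a b. pair a b \<noteq> 0 \<longrightarrow> deg a + deg b = d"
  shows "lin (dbar_basis deg) (br_basis deg pair d v w) = lin (brNat_basis deg pair d v) (dbar_basis deg w)"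
proof
  fix z
  let ?c = "dbr_coeff deg pair d v"
  let ?m = "length w"
  let ?k = "length v"
  \<comment> \<open>terms of \<open>{v, \<partial>-bar w}\<close> pairing \<open>v\<^sub>i\<close> with the word part, resp. with the split-off letter \<open>w ! l\<close>\<close>
  define X :: "nat \<Rightarrow> nat \<Rightarrow> 'k" where "X i l =
      (\<Sum>j<?m - 1 - l. vec (dbr_word v (cyclic_remove w l) i j, w ! l) (?c (cyclic_remove w l) i j) z)
    + (\<Sum>q<l. vec (dbr_word v (cyclic_remove w l) i (?m - 1 - l + q), w ! l)
                  (?c (cyclic_remove w l) i (?m - 1 - l + q)) z)" for i l
  define Y :: "nat \<Rightarrow> nat \<Rightarrow> 'k" where "Y i l =
      ?c (cyclic_remove w l @ [w ! l]) i (?m - 1)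
      * (\<Sum>s<?k - 1. nat_term deg (cyclic_remove w l @ cyclic_remove v i) [] (?m - 1 + s) z)" for i l
  have "lin (dbar_basis deg) (br_basis deg pair d v w) z
      = (\<Sum>i<?k. \<Sum>j<?m. ?c w i j * dbar_basis deg (dbr_word v w i j) z)"
    unfolding br_basis_def by (simp add: lin_sum_vec2)
  also have "\<dots> = (\<Sum>i<?k. \<Sum>l<?m. dbar_sign deg w l * (X i l + Y i l))"
  proof (rule sum.cong[OF refl])
    fix i
    assume "i \<in> {..<?k}"
    then have i: "i < ?k" by simp
    have "(\<Sum>j<?m. ?c w i j * dbar_basis deg (dbr_word v w i j) z)
       = (\<Sum>j<?m. ?c w i j * (\<Sum>t<j. dbar_term deg (dbr_word v w i j) t z))
       + (\<Sum>j<?m. ?c w i j * (\<Sum>r<?m - 1 - j. dbar_term deg (dbr_word v w i j) (j + (?k - 1) + r) z))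
       + (\<Sum>j<?m. ?c w i j * (\<Sum>s<?k - 1. dbar_term deg (dbr_word v w i j) (j + s) z))"
      unfolding sum.distrib[symmetric]
      by (rule sum.cong[OF refl]) (simp add: dbar_basis_dbr_word[OF i] algebra_simps)
    then show "(\<Sum>j<?m. ?c w i j * dbar_basis deg (dbr_word v w i j) z)
        = (\<Sum>l<?m. dbar_sign deg w l * (X i l + Y i l))"
      unfolding dbar_br_basis_prefix[OF pair_deg i] dbar_br_basis_suffix[OF pair_deg i]
        dbar_br_basis_middle[OF pair_deg i] X_def Y_def
      by (simp add: sum.distrib distrib_left add.assoc)
  qed
  also have "\<dots> = (\<Sum>l<?m. dbar_sign deg w l * (\<Sum>i<?k. X i l + Y i l))"
    by (simp add: sum_distrib_left) (rule sum.swap)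
  also have "\<dots> = (\<Sum>l<?m. dbar_sign deg w l * brNat_basis deg pair d v (cyclic_remove w l, w ! l) z)"
    by (intro sum.cong refl) (simp add: brNat_basis_cyclic_remove X_def Y_def sum.distrib)
  also have "\<dots> = lin (brNat_basis deg pair d v) (dbar_basis deg w) z"
    unfolding dbar_basis_def dbar_term_def by (simp add: lin_sum_vec)
  finally show "lin (dbar_basis deg) (br_basis deg pair d v w) z = lin (brNat_basis deg pair d v) (dbar_basis deg w) z" .
qed

lemma dbar_br:
  fixes pair :: "'b \<Rightarrow> 'b \<Rightarrow> 'k::field"
  assumes pair_deg: "\<forall>a b. pair a b \<noteq> 0 \<longrightarrow> deg a + deg b = d"
    and r: "fin_supp r" and q: "fin_supp q"
  shows "dbar deg (br deg pair d r q) = brNat deg pair d r (dbar deg q)"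
proof -
  have "dbar deg (br deg pair d r q) = ext2 (\<lambda>a w. lin (dbar_basis deg) (br_basis deg pair d a w)) r q"
    unfolding dbar_eq_lin br_eq_ext2[OF r q] using r q by (rule lin_ext2) auto
  also have "\<dots> = ext2 (\<lambda>a w. lin (brNat_basis deg pair d a) (dbar_basis deg w)) r q"
    by (simp only: dbar_br_basis[OF pair_deg])
  also have "\<dots> = ext2 (brNat_basis deg pair d) r (dbar deg q)"
    unfolding dbar_eq_lin using q by (rule ext2_lin_right[symmetric]) auto
  also have "\<dots> = brNat deg pair d r (dbar deg q)"
    unfolding dbar_eq_lin using r q by (intro brNat_eq_ext2[symmetric]) auto
  finally show ?thesis .
qed

lemma beta_brNat:
  fixes pair :: "'b \<Rightarrow> 'b \<Rightarrow> 'k::field"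
  assumes pair_deg: "\<forall>a b. pair a b \<noteq> 0 \<longrightarrow> deg a + deg b = d"
    and r: "fin_supp r" and \<omega>: "fin_supp \<omega>"
  shows "beta deg (brNat deg pair d r \<omega>) = br deg pair d r (beta deg \<omega>)"
proof -
  have "beta deg (brNat deg pair d r \<omega>) = ext2 (\<lambda>a p. lin (beta_basis deg) (brNat_basis deg pair d a p)) r \<omega>"
    unfolding beta_eq_lin brNat_eq_ext2[OF r \<omega>] using r \<omega> by (rule lin_ext2) auto
  also have "\<dots> = ext2 (\<lambda>a p. lin (br_basis deg pair d a) (beta_basis deg p)) r \<omega>"
    by (simp only: beta_brNat_basis[OF pair_deg])
  also have "\<dots> = ext2 (br_basis deg pair d) r (beta deg \<omega>)"
    unfolding beta_eq_lin using \<omega> by (rule ext2_lin_right[symmetric]) auto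
  also have "\<dots> = br deg pair d r (beta deg \<omega>)"
    unfolding beta_eq_lin using r \<omega> by (intro br_eq_ext2[symmetric]) auto
  finally show ?thesis .
qed

theorem theorem5p4:
  fixes deg :: "'b \<Rightarrow> int"
    and D :: "nat \<Rightarrow> 'b \<Rightarrow> 'b list \<Rightarrow> 'k::field"
    and pair :: "'b \<Rightarrow> 'b \<Rightarrow> 'k"
    and d :: int
  assumes "cyclic_Ainf_coalgebra deg D pair d"
  shows "(\<forall>r q :: 'b list \<Rightarrow> 'k. fin_supp r \<longrightarrow> fin_supp q \<longrightarrow>
            dbar deg (br deg pair d r q) = brNat deg pair d r (dbar deg q))
       \<and> (\<forall>(r :: 'b list \<Rightarrow> 'k) (\<omega> :: 'b list \<times> 'b \<Rightarrow> 'k). fin_supp r \<longrightarrow> fin_supp \<omega> \<longrightarrow>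
            beta deg (brNat deg pair d r \<omega>) = br deg pair d r (beta deg \<omega>))"
proof -
  from assms have "cyclic_pairing deg D pair d"
    unfolding cyclic_Ainf_coalgebra_def by (rule conjunct2)
  then have pair_deg: "\<forall>a b. pair a b \<noteq> 0 \<longrightarrow> deg a + deg b = d"
    unfolding cyclic_pairing_def by (rule conjunct1)
  show ?thesis using dbar_br[OF pair_deg] beta_brNat[OF pair_deg] by blast
qed

end
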